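(* Let the pumping $A_p:\mathbb R\to\mathbb R$ be continuous and $T$-periodic. Consider the Maxwell--Bloch system on $\mathbb X=\mathbb R^2\times S^3$, \[ \dot A=B,\quad \dot B=-\Omega^2A-\sigma B+cj,\quad i\hbar\dot C_1=\hbar\omega_1C_1+iaC_2,\quad i\hbar\dot C_2=\hbar\omega_2C_2-iaC_1, \] with $j=2q\,\mathrm{Im}[\overline{C_1}C_2]$, $a(t)=\frac qc[A(t)+A_p(t)]$, its reduced dynamics $\dot Y=F(Y,t)$ on $\mathbb Y=\mathbb R^2\times S^2$, and let $U(t):\mathbb Y\to\mathbb Y$ be the map sending $Y(0)$ to $Y(t)$ for solutions of the reduced dynamics. Then the set $\Phi=\{Y_\#\in\mathbb Y: U(T)Y_\#=Y_\#\}$ of fixed points of the Poincaré map $U(T)$ is bounded in $\mathbb Y$.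
   Context: Parameters: $\Omega,\sigma,c,\hbar,p>0$, real $\omega_2>\omega_1$, $\omega=\omega_2-\omega_1$, $q=\omega p$. $S^3=\{C=(C_1,C_2)\in\mathbb C^2:|C_1|^2+|C_2|^2=1\}$. $U(1)$ acts on $\mathbb X$ by $(A,B,C)\mapsto(A,B,e^{i\theta}C)$, commuting with the flow. The map $\Pi(A,B,C)=(A,B,h(C))$, with $h:S^3\to S^2$ the Hopf fibration, identifies $\mathbb X/U(1)$ with $\mathbb Y=\mathbb R^2\times S^2$; the reduced dynamics is the induced time-dependent vector field on $\mathbb Y$, and boundedness refers to the $\mathbb R^2$ component $(A,B)$ (the $S^2$ factor is compact). *)

theory Defs
  imports "HOL-Analysis.Analysis"
begin

definition hopf :: "complex \<Rightarrow> complex \<Rightarrow> real \<times> real \<times> real" where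
  "hopf C1 C2 = (2 * Re (cnj C1 * C2), 2 * Im (cnj C1 * C2), (cmod C1)^2 - (cmod C2)^2)"

definition Pi_red :: "real \<Rightarrow> real \<Rightarrow> complex \<Rightarrow> complex \<Rightarrow> (real \<times> real) \<times> (real \<times> real \<times> real)" where
  "Pi_red A B C1 C2 = ((A, B), hopf C1 C2)"

text \<open>(A,B,C1,C2) is a solution on [0,T] of the Maxwell--Bloch system with parameters
  Om (Omega), sg (sigma), c, hb (hbar), w1, w2 (omega_1, omega_2), p and pumping Ap;
  q = (w2 - w1) p, a(t) = q/c (A t + Ap t), j = 2 q Im(conj C1 C2); the state lies in R^2 x S^3.\<close>
definition MB_solution ::
  "real \<Rightarrow> real \<Rightarrow> real \<Rightarrow> real \<Rightarrow> real \<Rightarrow> real \<Rightarrow> real \<Rightarrow> (real \<Rightarrow> real) \<Rightarrow> real \<Rightarrow>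
   (real \<Rightarrow> real) \<Rightarrow> (real \<Rightarrow> real) \<Rightarrow> (real \<Rightarrow> complex) \<Rightarrow> (real \<Rightarrow> complex) \<Rightarrow> bool" where
  "MB_solution Om sg c hb w1 w2 p Ap T A B C1 C2 \<longleftrightarrow>
     (let q = (w2 - w1) * p;
          a = (\<lambda>t. q / c * (A t + Ap t));
          j = (\<lambda>t. 2 * q * Im (cnj (C1 t) * C2 t))
      in \<forall>t\<in>{0..T}.
           (cmod (C1 t))^2 + (cmod (C2 t))^2 = 1
         \<and> (A has_real_derivative B t) (at t within {0..T})
         \<and> (B has_real_derivative (c * j t - (Om ^ 2) * A t - sg * B t)) (at t within {0..T})
         \<and> (\<exists>d1 d2. (C1 has_vector_derivative d1) (at t within {0..T})
                  \<and> (C2 has_vector_derivative d2) (at t within {0..T})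
                  \<and> \<i> * complex_of_real hb * d1 =
                      complex_of_real (hb * w1) * C1 t + \<i> * complex_of_real (a t) * C2 t
                  \<and> \<i> * complex_of_real hb * d2 =
                      complex_of_real (hb * w2) * C2 t - \<i> * complex_of_real (a t) * C1 t))"

text \<open>Fixed points of the Poincare map U(T) of the reduced dynamics: Y# such that the reduced
  trajectory (the Pi-image of a solution of the full system) starting at Y# at time 0 is again at
  Y# at time T.\<close>
definition MB_fixed_points ::
  "real \<Rightarrow> real \<Rightarrow> real \<Rightarrow> real \<Rightarrow> real \<Rightarrow> real \<Rightarrow> real \<Rightarrow> (real \<Rightarrow> real) \<Rightarrow> real \<Rightarrow>
   ((real \<times> real) \<times> (real \<times> real \<times> real)) set" where
  "MB_fixed_points Om sg c hb w1 w2 p Ap T =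
     {Y. \<exists>A B C1 C2. MB_solution Om sg c hb w1 w2 p Ap T A B C1 C2
            \<and> Pi_red (A 0) (B 0) (C1 0) (C2 0) = Y
            \<and> Pi_red (A T) (B T) (C1 T) (C2 T) = Y}"

end

theory Submission
  imports Defs
begin

(* For the
   quadratic form V = B^2 + sg A B + (Om^2 + sg^2/2) A^2 one has
   V' = f (2 B + sg A) - sg (B^2 + Om^2 A^2), which is negative as soon as V exceeds a level R
   depending only on sg, Om and the bound on f. Along a T-periodic trajectory V attains its
   maximum at a time approached from the left, where V' >= 0; so V <= R at every fixed point of
   the Poincare map, confining (A, B) to a bounded set, while the S^2 component has norm 1. *)

lemma has_real_derivative_nonneg_at_left_max:
  fixes f :: "real \<Rightarrow> real"
  assumes der: "(f has_real_derivative D) (at x within S)"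
    and "a < x" "{a..x} \<subseteq> S" and max: "\<And>y. y \<in> {a..x} \<Longrightarrow> f y \<le> f x"
  shows "0 \<le> D"
proof (rule ccontr)
  assume "\<not> 0 \<le> D"
  then obtain d where "d > 0" and dec: "\<And>h. 0 < h \<Longrightarrow> x - h \<in> S \<Longrightarrow> h < d \<Longrightarrow> f x < f (x - h)"
    using has_real_derivative_neg_dec_left[OF der] by force
  define h where "h = min (d/2) (x - a)"
  have "0 < h" "h < d" "x - h \<in> {a..x}"
    using \<open>d > 0\<close> \<open>a < x\<close> by (auto simp: h_def)
  then show False
    using dec max \<open>{a..x} \<subseteq> S\<close> by fastforce
qed

lemma le_if_periodic_and_deriv_neg_above:
  fixes V V' :: "real \<Rightarrow> real"
  assumes "a < b" "V b = V a"
    and der: "\<And>t. t \<in> {a..b} \<Longrightarrow> (V has_real_derivative V' t) (at t within {a..b})"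
    and neg: "\<And>t. t \<in> {a..b} \<Longrightarrow> R < V t \<Longrightarrow> V' t < 0"
    and "t \<in> {a..b}"
  shows "V t \<le> R"
proof -
  have "continuous_on {a..b} V"
    using der DERIV_continuous continuous_on_eq_continuous_within by blast
  then obtain x0 where "x0 \<in> {a..b}" and max0: "\<And>y. y \<in> {a..b} \<Longrightarrow> V y \<le> V x0"
    using continuous_attains_sup[of "{a..b}" V] \<open>a < b\<close> by fastforce
  \<comment> \<open>By periodicity a maximum at \<open>a\<close> is also attained at \<open>b\<close>, so it can be approached from the left.\<close>
  obtain x where x: "x \<in> {a<..b}" and max: "\<And>y. y \<in> {a..b} \<Longrightarrow> V y \<le> V x"
  proof (cases "x0 = a")
    case True
    then show thesis
      using that[of b] max0 \<open>a < b\<close> \<open>V b = V a\<close> by simp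
  next
    case False
    then show thesis
      using that[of x0] max0 \<open>x0 \<in> {a..b}\<close> by simp
  qed
  have "0 \<le> V' x"
    using x max by (intro has_real_derivative_nonneg_at_left_max[OF der, of x a]) auto
  moreover have "x \<in> {a..b}"
    using x by simp
  ultimately have "V x \<le> R"
    using neg by (meson not_le)
  then show ?thesis
    using max[OF \<open>t \<in> {a..b}\<close>] by linarith
qed

lemma abs_Im_cnj_mult_le:
  "2 * \<bar>Im (cnj z * w)\<bar> \<le> (cmod z)^2 + (cmod w)^2"
proof -
  have "\<bar>Im (cnj z * w)\<bar> \<le> cmod z * cmod w"
    using abs_Im_le_cmod[of "cnj z * w"] by (simp add: norm_mult)
  then show ?thesis
    using sum_squares_bound[of "cmod z" "cmod w"] by linarith
qed

definition osc_energy :: "real \<Rightarrow> real \<Rightarrow> real \<Rightarrow> real \<Rightarrow> real" where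
  "osc_energy sg Om A B = B^2 + sg * A * B + (Om^2 + sg^2/2) * A^2"

definition forced_osc_solution ::
  "real \<Rightarrow> real \<Rightarrow> real \<Rightarrow> (real \<Rightarrow> real) \<Rightarrow> (real \<Rightarrow> real) \<Rightarrow> (real \<Rightarrow> real) \<Rightarrow> bool" where
  "forced_osc_solution sg Om T f A B \<longleftrightarrow>
     (\<forall>t\<in>{0..T}. (A has_real_derivative B t) (at t within {0..T})
        \<and> (B has_real_derivative (f t - Om^2 * A t - sg * B t)) (at t within {0..T}))"

lemma osc_energy_le_sum_squares:
  assumes "sg \<ge> 0"
  shows "osc_energy sg Om A B \<le> (1 + sg + Om^2 + sg^2/2) * (A^2 + B^2)"
proof -
  have "A * B \<le> A^2 + B^2"
    using sum_squares_bound[of A B] zero_le_power2[of A] zero_le_power2[of B] by linarith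
  then have "sg * A * B \<le> sg * (A^2 + B^2)"
    using assms by (simp add: mult.assoc mult_left_mono)
  moreover have "(1 + sg + Om^2 + sg^2/2) * (A^2 + B^2) - osc_energy sg Om A B
      = A^2 + (sg * (A^2 + B^2) - sg * A * B) + (Om^2 + sg^2/2) * B^2"
    by (simp add: osc_energy_def algebra_simps)
  moreover have "0 \<le> (Om^2 + sg^2/2) * B^2" "0 \<le> A^2" by simp_all
  ultimately show ?thesis by linarith
qed

lemma osc_energy_completed_square:
  "osc_energy sg Om A B = (B + sg * A / 2)^2 + (Om^2 + sg^2/4) * A^2"
  by (simp add: osc_energy_def power2_eq_square algebra_simps)

lemma sum_squares_le_osc_energy:
  assumes "Om \<noteq> 0"
  shows "A^2 + B^2 \<le> (2 + (1 + sg^2/2) / Om^2) * osc_energy sg Om A B"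
proof -
  define P where "P = (B + sg * A / 2)^2"
  define Q where "Q = (Om^2 + sg^2/4) * A^2"
  have "A^2 + B^2 \<le> 2 * P + (1 + sg^2/2) * A^2"
    using zero_le_power2[of "B + sg * A"] by (simp add: P_def power2_eq_square algebra_simps)
  moreover have "(1 + sg^2/2) * A^2 \<le> (1 + sg^2/2) / Om^2 * Q"
  proof -
    have "(1 + sg^2/2) * A^2 = (1 + sg^2/2) / Om^2 * (Om^2 * A^2)"
      using assms by simp
    also have "\<dots> \<le> (1 + sg^2/2) / Om^2 * Q"
      by (intro mult_left_mono) (simp_all add: Q_def mult_right_mono)
    finally show ?thesis .
  qed
  moreover have "(2 + (1 + sg^2/2) / Om^2) * osc_energy sg Om A B
      = 2 * P + (1 + sg^2/2) / Om^2 * Q + (2 * Q + (1 + sg^2/2) / Om^2 * P)"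
    by (simp add: osc_energy_completed_square P_def Q_def algebra_simps)
  moreover have "0 \<le> 2 * Q + (1 + sg^2/2) / Om^2 * P"
    by (simp add: P_def Q_def)
  ultimately show ?thesis by linarith
qed

lemma bounded_osc_energy_sublevel:
  assumes "Om \<noteq> 0"
  shows "bounded {(A, B). osc_energy sg Om A B \<le> R}"
proof -
  define k where "k = 2 + (1 + sg^2/2) / Om^2"
  have "{(A, B). osc_energy sg Om A B \<le> R} \<subseteq> cball 0 (sqrt (k * R))"
  proof clarsimp
    fix A B assume "osc_energy sg Om A B \<le> R"
    moreover have "0 \<le> k"
      by (simp add: k_def)
    ultimately have "k * osc_energy sg Om A B \<le> k * R"
      by (rule mult_left_mono)
    then have "A^2 + B^2 \<le> k * R"
      using sum_squares_le_osc_energy[OF assms, of A B sg] unfolding k_def by linarith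
    then show "norm (A, B) \<le> sqrt (k * R)"
      by (simp add: norm_Pair real_sqrt_le_mono)
  qed
  then show ?thesis by (rule bounded_subset[rotated]) simp
qed

lemma has_real_derivative_osc_energy:
  assumes "(A has_real_derivative B t) (at t within S)"
    and "(B has_real_derivative (f - Om^2 * A t - sg * B t)) (at t within S)"
  shows "((\<lambda>t. osc_energy sg Om (A t) (B t)) has_real_derivative
           f * (2 * B t + sg * A t) - sg * ((B t)^2 + Om^2 * (A t)^2)) (at t within S)"
  unfolding osc_energy_def
  by (rule derivative_eq_intros assms refl)+ (simp add: algebra_simps power2_eq_square)

lemma osc_energy_dissipative:
  assumes sg: "sg > 0" and Om: "Om \<noteq> 0"
  obtains R where "\<And>A B f. \<bar>f\<bar> \<le> F \<Longrightarrow> R < osc_energy sg Om A B \<Longrightarrow>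
                     f * (2 * B + sg * A) - sg * (B^2 + Om^2 * A^2) < 0"
proof
  define m where "m = min 1 (Om^2)"
  define K where "K = 1 + sg + Om^2 + sg^2/2"
  define r where "r = F * (2 + sg) / (sg * m)"
  fix A B f
  assume f: "\<bar>f\<bar> \<le> F" and big: "K * r^2 < osc_energy sg Om A B"
  define s where "s = sqrt (A^2 + B^2)"
  have m: "m > 0" using Om by (simp add: m_def)
  have "0 \<le> r" using f sg m by (simp add: r_def)
  have As: "\<bar>A\<bar> \<le> s" and Bs: "\<bar>B\<bar> \<le> s"
    unfolding s_def by (simp_all add: real_le_rsqrt)
  have "K * r^2 < K * s^2"
    using big osc_energy_le_sum_squares[of sg Om A B] sg by (simp add: K_def s_def)
  moreover have "K > 0"
    using sg by (simp add: K_def add_pos_nonneg)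
  ultimately have "r^2 < A^2 + B^2"
    by (simp add: s_def)
  then have "r < s"
    unfolding s_def by (rule real_less_rsqrt)
  have "\<bar>2 * B + sg * A\<bar> \<le> \<bar>2 * B\<bar> + \<bar>sg * A\<bar>"
    by (rule abs_triangle_ineq)
  also have "\<dots> = 2 * \<bar>B\<bar> + sg * \<bar>A\<bar>"
    using sg by (simp add: abs_mult)
  also have "\<dots> \<le> (2 + sg) * s"
    using As Bs sg by (simp add: distrib_right add_mono)
  finally have "\<bar>2 * B + sg * A\<bar> \<le> (2 + sg) * s" .
  have "f * (2 * B + sg * A) \<le> \<bar>f\<bar> * \<bar>2 * B + sg * A\<bar>"
    by (metis abs_ge_self abs_mult)
  also have "\<dots> \<le> F * ((2 + sg) * s)"
    using f \<open>\<bar>2 * B + sg * A\<bar> \<le> (2 + sg) * s\<close> by (intro mult_mono) auto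
  also have "\<dots> = sg * m * r * s"
    using sg m by (simp add: r_def)
  also have "\<dots> < sg * m * s * s"
    using \<open>r < s\<close> \<open>0 \<le> r\<close> sg m by (intro mult_strict_right_mono mult_strict_left_mono) auto
  also have "\<dots> \<le> sg * (B^2 + Om^2 * A^2)"
  proof -
    have "m * (s * s) = m * A^2 + m * B^2"
      by (simp add: s_def distrib_left)
    also have "\<dots> \<le> Om^2 * A^2 + 1 * B^2"
      by (intro add_mono mult_right_mono) (simp_all add: m_def)
    finally show ?thesis using sg by (simp add: mult.assoc add.commute)
  qed
  finally show "f * (2 * B + sg * A) - sg * (B^2 + Om^2 * A^2) < 0" by simp
qed

lemma periodic_forced_osc_energy_bounded:
  assumes "sg > 0" "Om \<noteq> 0" "T > 0"
  obtains R where
    "\<And>f A B. forced_osc_solution sg Om T f A B \<Longrightarrow> (\<And>t. t \<in> {0..T} \<Longrightarrow> \<bar>f t\<bar> \<le> F) \<Longrightarrow>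
       A T = A 0 \<Longrightarrow> B T = B 0 \<Longrightarrow> osc_energy sg Om (A 0) (B 0) \<le> R"
proof -
  obtain R where diss: "\<And>A B f. \<bar>f\<bar> \<le> F \<Longrightarrow> R < osc_energy sg Om A B \<Longrightarrow>
                          f * (2 * B + sg * A) - sg * (B^2 + Om^2 * A^2) < 0"
    using osc_energy_dissipative assms(1,2) by blast
  show thesis
  proof (rule that)
    fix f A B
    assume sol: "forced_osc_solution sg Om T f A B" and f: "\<And>t. t \<in> {0..T} \<Longrightarrow> \<bar>f t\<bar> \<le> F"
      and "A T = A 0" "B T = B 0"
    show "osc_energy sg Om (A 0) (B 0) \<le> R"
    proof (rule le_if_periodic_and_deriv_neg_above
        [where a = 0 and b = T and t = 0 and V = "\<lambda>t. osc_energy sg Om (A t) (B t)"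
           and V' = "\<lambda>t. f t * (2 * B t + sg * A t) - sg * ((B t)^2 + Om^2 * (A t)^2)"])
      fix t assume "t \<in> {0..T}"
      then show "((\<lambda>t. osc_energy sg Om (A t) (B t)) has_real_derivative
                   f t * (2 * B t + sg * A t) - sg * ((B t)^2 + Om^2 * (A t)^2)) (at t within {0..T})"
        using sol unfolding forced_osc_solution_def by (blast intro: has_real_derivative_osc_energy)
    qed (use \<open>T > 0\<close> \<open>A T = A 0\<close> \<open>B T = B 0\<close> diss f in auto)
  qed
qed

lemma norm_hopf: "norm (hopf C1 C2) = (cmod C1)^2 + (cmod C2)^2"
proof -
  have re_im: "(2 * Re u)^2 + (2 * Im u)^2 = 4 * (cmod u)^2" for u
    by (simp add: cmod_power2 power_mult_distrib)
  have "norm (hopf C1 C2)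
      = sqrt ((2 * Re (cnj C1 * C2))^2 + (2 * Im (cnj C1 * C2))^2 + ((cmod C1)^2 - (cmod C2)^2)^2)"
    by (simp add: hopf_def norm_Pair add.assoc)
  also have "\<dots> = sqrt (4 * (cmod C1)^2 * (cmod C2)^2 + ((cmod C1)^2 - (cmod C2)^2)^2)"
    unfolding re_im by (simp add: norm_mult power_mult_distrib)
  also have "\<dots> = sqrt (((cmod C1)^2 + (cmod C2)^2)^2)"
    by (simp add: power2_diff power2_sum)
  finally show ?thesis by simp
qed

lemma MB_solution_unit_sphere:
  assumes "MB_solution Om sg c hb w1 w2 p Ap T A B C1 C2" "t \<in> {0..T}"
  shows "(cmod (C1 t))^2 + (cmod (C2 t))^2 = 1"
  using assms by (simp add: MB_solution_def Let_def)

lemma MB_solution_forced_osc: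
  assumes sol: "MB_solution Om sg c hb w1 w2 p Ap T A B C1 C2"
    and "c \<ge> 0" "(w2 - w1) * p \<ge> 0"
  obtains f where "forced_osc_solution sg Om T f A B"
    "\<And>t. t \<in> {0..T} \<Longrightarrow> \<bar>f t\<bar> \<le> c * ((w2 - w1) * p)"
proof
  show "forced_osc_solution sg Om T (\<lambda>t. c * (2 * ((w2 - w1) * p) * Im (cnj (C1 t) * C2 t))) A B"
    using sol by (simp add: MB_solution_def forced_osc_solution_def Let_def)
  fix t assume "t \<in> {0..T}"
  define q where "q = (w2 - w1) * p"
  define u where "u = cnj (C1 t) * C2 t"
  have "0 \<le> q"
    using \<open>(w2 - w1) * p \<ge> 0\<close> by (simp add: q_def)
  have "2 * \<bar>Im u\<bar> \<le> 1"
    using abs_Im_cnj_mult_le MB_solution_unit_sphere[OF sol \<open>t \<in> {0..T}\<close>] unfolding u_def by metis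
  then have "c * (q * (2 * \<bar>Im u\<bar>)) \<le> c * (q * 1)"
    using \<open>0 \<le> c\<close> \<open>0 \<le> q\<close> by (intro mult_left_mono) simp_all
  moreover have "\<bar>c * (2 * q * Im u)\<bar> = c * (q * (2 * \<bar>Im u\<bar>))"
    using \<open>0 \<le> c\<close> \<open>0 \<le> q\<close> by (simp add: abs_mult)
  ultimately show "\<bar>c * (2 * ((w2 - w1) * p) * Im (cnj (C1 t) * C2 t))\<bar> \<le> c * ((w2 - w1) * p)"
    by (simp flip: q_def u_def)
qed

theorem lemma4p2:
  fixes Om sg c hb w1 w2 p T :: real and Ap :: "real \<Rightarrow> real"
  assumes "Om > 0" "sg > 0" "c > 0" "hb > 0" "p > 0" "w2 > w1"
    and "T > 0" "continuous_on UNIV Ap" "\<And>t. Ap (t + T) = Ap t"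
  shows "bounded (MB_fixed_points Om sg c hb w1 w2 p Ap T)"
proof -
  have "c \<ge> 0" "(w2 - w1) * p \<ge> 0" "Om \<noteq> 0"
    using assms by simp_all
  obtain R where R: "\<And>f A B. forced_osc_solution sg Om T f A B \<Longrightarrow>
      (\<And>t. t \<in> {0..T} \<Longrightarrow> \<bar>f t\<bar> \<le> c * ((w2 - w1) * p)) \<Longrightarrow>
      A T = A 0 \<Longrightarrow> B T = B 0 \<Longrightarrow> osc_energy sg Om (A 0) (B 0) \<le> R"
    using periodic_forced_osc_energy_bounded[OF \<open>sg > 0\<close> \<open>Om \<noteq> 0\<close> \<open>T > 0\<close>,
        where F = "c * ((w2 - w1) * p)"] by metis
  have "MB_fixed_points Om sg c hb w1 w2 p Ap T \<subseteq> {(A, B). osc_energy sg Om A B \<le> R} \<times> sphere 0 1"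
  proof
    fix Y assume "Y \<in> MB_fixed_points Om sg c hb w1 w2 p Ap T"
    then obtain A B C1 C2 where sol: "MB_solution Om sg c hb w1 w2 p Ap T A B C1 C2"
      and Y0: "Pi_red (A 0) (B 0) (C1 0) (C2 0) = Y" and YT: "Pi_red (A T) (B T) (C1 T) (C2 T) = Y"
      unfolding MB_fixed_points_def by blast
    obtain f where "forced_osc_solution sg Om T f A B" "\<And>t. t \<in> {0..T} \<Longrightarrow> \<bar>f t\<bar> \<le> c * ((w2 - w1) * p)"
      using MB_solution_forced_osc[OF sol \<open>c \<ge> 0\<close> \<open>(w2 - w1) * p \<ge> 0\<close>] by blast
    moreover have "A T = A 0" "B T = B 0"
      using Y0 YT by (auto simp: Pi_red_def)
    ultimately have "osc_energy sg Om (A 0) (B 0) \<le> R"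
      by (rule R)
    moreover have "norm (hopf (C1 0) (C2 0)) = 1"
      using norm_hopf MB_solution_unit_sphere[OF sol] \<open>T > 0\<close> by simp
    ultimately show "Y \<in> {(A, B). osc_energy sg Om A B \<le> R} \<times> sphere 0 1"
      using Y0 by (auto simp: Pi_red_def)
  qed
  moreover have "bounded ({(A, B). osc_energy sg Om A B \<le> R} \<times> (sphere 0 1 :: (real \<times> real \<times> real) set))"
    using \<open>Om \<noteq> 0\<close> by (intro bounded_Times bounded_osc_energy_sublevel compact_imp_bounded) simp_all
  ultimately show ?thesis
    by (rule bounded_subset[rotated])
qed

end
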